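(* Let $(\mathcal{H},\langle\cdot,\cdot\rangle)$ be a real Hilbert space with induced norm $\lVert\cdot\rVert$, let $\tau,\tau_s>0$, $\alpha>0$, let $g\in\mathcal{C}^0(\mathbb{R}_{\geq0},\mathbb{R}_{\geq0})$ be monotone increasing with $g(0)=0$, and let $V\in\mathcal{C}^1(\mathbb{R}^2,\mathbb{R})$. Let $x_{s,0}\in\mathbb{R}_{\geq0}$ and $\mathbf{x}_0\in\mathcal{H}$. Assume: (A1) there exist constants $a>0$, $b\geq0$ and an increasing $h\in\mathcal{C}^0(\mathbb{R}_{\geq0},\mathbb{R}_{\geq0})$ with $h(0)=0$ such that $a r-b\leq\frac{\partial}{\partial r}V(r,x_s)$ for all $r\geq0$ and all $x_s\geq0$, and such that for all $\overline r\geq0$, all $r\in[0,\overline r]$ and all $x_s\in[0,|x_{s,0}|+g(\overline r)]$ one has $\frac{\partial}{\partial r}V(r,x_s)\leq h(\overline r)\,r$; (A2) the scalar gradient system $\dot r=-\frac{\partial}{\partial r}V(r,x_s)$ (with parameter $x_s$) has an equilibrium at $r=0$ which undergoes a subcritical pitchfork bifurcation at $x_s=\underline{x}_s$; more precisely there is $\overline{x}_s>\underline{x}_s$ such that for $x_s<\underline x_s$ it has two locally asymptotically stable equilibria $r=\pm r^*$; for $\underline x_s<x_s<\overline x_s$ it has three locally asymptotically stable equilibria $r=-r^*,0,r^*$ with $\partial r^*/\partial x_s<0$; and for $x_s>\overline x_s$, $r=0$ is globally asymptotically stable. Let $\mathbf{u}\in\mathcal{H}$ be constant with $\lVert\mathbf{u}\rVert>b/\alpha$,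 and let $(\mathbf{x}(t),x_s(t))$ be the solution, defined for $t\geq0$, of $$\tau\dot{\mathbf{x}}=-\frac{\partial}{\partial\mathbf{x}}V(\lVert\mathbf{x}\rVert,x_s)+\alpha\mathbf{u},\qquad \tau_s\dot{x}_s=-x_s+g(\lVert\mathbf{x}\rVert),$$ with $(\mathbf{x}(0),x_s(0))=(\mathbf{x}_0,x_{s,0})$. Then there exist a time $T\geq0$ and constants $\underline r,\overline r\in\mathbb{R}_{>0}$ such that $\lVert\mathbf{x}(t)\rVert\in[\underline r,\overline r]$ for all $t\geq T$.
   Context: $\frac{\partial}{\partial\mathbf{x}}V(\lVert\mathbf{x}\rVert,x_s)$ denotes the gradient in $\mathcal{H}$ of $\mathbf{x}\mapsto V(\lVert\mathbf{x}\rVert,x_s)$, equal to $\frac{\partial V}{\partial r}(\lVert\mathbf{x}\rVert,x_s)\,\mathbf{x}/\lVert\mathbf{x}\rVert$ for $\mathbf{x}\neq0$. Solutions are assumed to exist on $\mathbb{R}_{\geq0}$ for all initial conditions in $\mathcal{H}\times\mathbb{R}_{\geq0}$. *)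

theory Defs
  imports "HOL-Analysis.Analysis"
begin

definition scalar_sol :: "(real \<Rightarrow> real) \<Rightarrow> (real \<Rightarrow> real) \<Rightarrow> bool" where
  "scalar_sol f \<phi> \<longleftrightarrow> (\<forall>t\<ge>0. (\<phi> has_real_derivative f (\<phi> t)) (at t within {0..}))"

definition is_equilibrium :: "(real \<Rightarrow> real) \<Rightarrow> real \<Rightarrow> bool" where
  "is_equilibrium f e \<longleftrightarrow> f e = 0"

definition lyap_stable :: "(real \<Rightarrow> real) \<Rightarrow> real \<Rightarrow> bool" where
  "lyap_stable f e \<longleftrightarrow> (\<forall>\<epsilon>>0. \<exists>\<delta>>0. \<forall>\<phi>. scalar_sol f \<phi> \<and> \<bar>\<phi> 0 - e\<bar> < \<delta> \<longrightarrow>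
        (\<forall>t\<ge>0. \<bar>\<phi> t - e\<bar> < \<epsilon>))"

definition loc_asym_stable :: "(real \<Rightarrow> real) \<Rightarrow> real \<Rightarrow> bool" where
  "loc_asym_stable f e \<longleftrightarrow> is_equilibrium f e \<and> lyap_stable f e \<and>
     (\<exists>\<delta>>0. \<forall>\<phi>. scalar_sol f \<phi> \<and> \<bar>\<phi> 0 - e\<bar> < \<delta> \<longrightarrow> (\<phi> \<longlongrightarrow> e) at_top)"

definition glob_asym_stable :: "(real \<Rightarrow> real) \<Rightarrow> real \<Rightarrow> bool" where
  "glob_asym_stable f e \<longleftrightarrow> is_equilibrium f e \<and> lyap_stable f e \<and>
     (\<forall>\<phi>. scalar_sol f \<phi> \<longrightarrow> (\<phi> \<longlongrightarrow> e) at_top)"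

text \<open>Gradient in H of x \<mapsto> V(norm x, xs), given the partial derivative Vr = dV/dr:
  Vr(norm x, xs) x / norm x for x \<noteq> 0, and 0 at x = 0 (where Vr(0,xs) = 0 by (A2)).\<close>
definition gradV :: "(real \<Rightarrow> real \<Rightarrow> real) \<Rightarrow> 'a::real_normed_vector \<Rightarrow> real \<Rightarrow> 'a" where
  "gradV Vr x xs = (if x = 0 then 0 else (Vr (norm x) xs / norm x) *\<^sub>R x)"

end

theory Submission
  imports Defs
begin

text \<open>
  Along the flow, \<open>d/dt \<parallel>x\<parallel>\<^sup>2 = (2/\<tau>)(- V\<^sub>r(\<parallel>x\<parallel>, x\<^sub>s) \<parallel>x\<parallel> + \<alpha> \<langle>x, u\<rangle>)\<close>, and the lower bound
  of (A1) makes this negative as soon as \<open>a \<parallel>x\<parallel> > b + \<alpha> \<parallel>u\<parallel>\<close>; so \<open>\<parallel>x\<parallel>\<close> stays below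
  \<open>R = max \<parallel>x\<^sub>0\<parallel> ((b + \<alpha> \<parallel>u\<parallel>) / a)\<close>. The low-pass filter \<open>x\<^sub>s\<close> then stays in
  \<open>[0, |x\<^sub>s\<^sub>,\<^sub>0| + g R]\<close>, and the upper bound of (A1) gives \<open>V\<^sub>r(\<parallel>x\<parallel>, x\<^sub>s) \<le> h(R) \<parallel>x\<parallel>\<close>
  along the solution. Hence, while \<open>\<langle>x, u\<rangle>\<close> is below a small \<open>\<epsilon> > 0\<close>, it grows at a
  uniform positive rate (here \<open>b < \<alpha> \<parallel>u\<parallel>\<close> is used): it exceeds \<open>\<epsilon>\<close> in finite time and
  stays above, so \<open>\<parallel>x\<parallel> \<ge> \<epsilon> / \<parallel>u\<parallel>\<close> from then on.
\<close>

lemma has_real_derivative_inner: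
  fixes f g :: "real \<Rightarrow> 'a::real_inner"
  assumes "(f has_vector_derivative f') (at t within S)"
    and "(g has_vector_derivative g') (at t within S)"
  shows "((\<lambda>t. inner (f t) (g t)) has_real_derivative inner (f t) g' + inner f' (g t)) (at t within S)"
  using bounded_bilinear.has_vector_derivative[OF bounded_bilinear_inner assms]
  by (simp add: has_real_derivative_iff_has_vector_derivative)

lemma mvt_halfline:
  fixes f f' :: "real \<Rightarrow> real"
  assumes der: "\<And>t. 0 \<le> t \<Longrightarrow> (f has_real_derivative f' t) (at t within {0..})"
    and "0 \<le> s" "s < t"
  obtains z where "s < z" "z < t" "f t - f s = f' z * (t - s)"
proof -
  have "\<exists>z\<in>{s<..<t}. f t - f s = f' z * (t - s)"
  proof (rule mvt_simple[OF \<open>s < t\<close>])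
    fix z assume "s \<le> z" "z \<le> t"
    then have "(f has_real_derivative f' z) (at z within {s..t})"
      using der[of z] \<open>0 \<le> s\<close> by (auto intro: DERIV_subset)
    then show "(f has_derivative (*) (f' z)) (at z within {s..t})"
      by (simp add: has_field_derivative_def)
  qed
  then show ?thesis
    using that by auto
qed

lemma stays_above_level:
  fixes f f' :: "real \<Rightarrow> real"
  assumes der: "\<And>t. 0 \<le> t \<Longrightarrow> (f has_real_derivative f' t) (at t within {0..})"
    and push: "\<And>t. 0 \<le> t \<Longrightarrow> f t < c \<Longrightarrow> 0 < f' t"
    and t0: "0 \<le> t0" "c \<le> f t0" and "t0 \<le> t"
  shows "c \<le> f t"
proof (rule ccontr)
  assume below: "\<not> c \<le> f t"
  have "continuous_on {0..} f"
    using der by (meson DERIV_continuous atLeast_iff continuous_on_eq_continuous_within)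
  then have cont: "continuous_on {t0..t} f"
    by (rule continuous_on_subset) (use t0 in auto)
  define S where "S = {t0..t} \<inter> f -` {c..}"
  have "compact S"
    unfolding S_def using continuous_closed_preimage[OF cont]
    by (simp add: compact_eq_bounded_closed bounded_Int)
  moreover have "S \<noteq> {}"
    using t0 \<open>t0 \<le> t\<close> unfolding S_def by auto
  ultimately obtain m where m: "m \<in> S" and m_max: "\<forall>s\<in>S. s \<le> m"
    using compact_attains_sup by blast
  have "t0 \<le> m" "m \<le> t" "c \<le> f m"
    using m unfolding S_def by auto
  then have "m < t"
    using below by (metis order.not_eq_order_implies_strict)
  obtain z where z: "m < z" "z < t" and mvt: "f t - f m = f' z * (t - m)"
    using mvt_halfline[OF der] t0 \<open>t0 \<le> m\<close> \<open>m < t\<close> by (metis order.trans)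
  have "z \<notin> S"
    using m_max z by (meson not_le)
  then have "f z < c"
    using z \<open>t0 \<le> m\<close> unfolding S_def by auto
  then have "0 < f' z"
    using push z t0 \<open>t0 \<le> m\<close> by simp
  then have "0 < f' z * (t - m)"
    using z by simp
  then show False
    using mvt \<open>c \<le> f m\<close> below by linarith
qed

lemma stays_below_level:
  fixes f f' :: "real \<Rightarrow> real"
  assumes der: "\<And>t. 0 \<le> t \<Longrightarrow> (f has_real_derivative f' t) (at t within {0..})"
    and push: "\<And>t. 0 \<le> t \<Longrightarrow> c < f t \<Longrightarrow> f' t < 0"
    and "0 \<le> t0" "f t0 \<le> c" "t0 \<le> t"
  shows "f t \<le> c"
proof -
  have "- c \<le> - f t"
    by (rule stays_above_level[where f = "\<lambda>t. - f t" and f' = "\<lambda>t. - f' t"])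
      (use assms in \<open>auto intro: DERIV_minus\<close>)
  then show ?thesis
    by simp
qed

lemma eventually_stays_above_level:
  fixes f f' :: "real \<Rightarrow> real"
  assumes der: "\<And>t. 0 \<le> t \<Longrightarrow> (f has_real_derivative f' t) (at t within {0..})"
    and push: "\<And>t. 0 \<le> t \<Longrightarrow> f t < c \<Longrightarrow> k \<le> f' t" and "0 < k"
  shows "\<exists>T\<ge>0. \<forall>t\<ge>T. c \<le> f t"
proof -
  have "\<exists>T\<ge>0. c \<le> f T"
  proof (rule ccontr)
    assume "\<nexists>T. 0 \<le> T \<and> c \<le> f T"
    then have below: "f t < c" if "0 \<le> t" for t
      using that by (meson not_le)
    \<comment> \<open>below the level f grows at least linearly, so it passes c before time T\<close>
    define T where "T = \<bar>c - f 0\<bar> / k + 1"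
    have "0 < T"
      using \<open>0 < k\<close> by (simp add: T_def add_nonneg_pos)
    then obtain z where "0 < z" and mvt: "f T - f 0 = f' z * T"
      using mvt_halfline[OF der, of 0 T] by auto
    have "k * T \<le> f' z * T"
      using push[of z] below[of z] \<open>0 < z\<close> \<open>0 < T\<close> by simp
    moreover have "k * T = \<bar>c - f 0\<bar> + k"
      using \<open>0 < k\<close> by (simp add: T_def field_simps)
    ultimately show False
      using mvt below[of T] \<open>0 < T\<close> \<open>0 < k\<close> by linarith
  qed
  then obtain T where "0 \<le> T" "c \<le> f T"
    by blast
  moreover have "0 < f' t" if "0 \<le> t" "f t < c" for t
    using push[OF that] \<open>0 < k\<close> by linarith
  ultimately show ?thesis
    using stays_above_level[OF der] by blast
qed

lemma first_order_lag_ge: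
  fixes y w :: "real \<Rightarrow> real"
  assumes "0 < \<tau>"
    and der: "\<And>t. 0 \<le> t \<Longrightarrow> (y has_real_derivative (1 / \<tau>) * (- y t + w t)) (at t within {0..})"
    and "\<And>t. 0 \<le> t \<Longrightarrow> m \<le> w t" and "m \<le> y 0" and "0 \<le> t"
  shows "m \<le> y t"
proof (rule stays_above_level[OF der])
  fix s assume "0 \<le> s" "y s < m"
  then show "0 < (1 / \<tau>) * (- y s + w s)"
    using assms(3)[of s] assms(1) by simp
qed (use assms in auto)

lemma first_order_lag_le:
  fixes y w :: "real \<Rightarrow> real"
  assumes "0 < \<tau>"
    and der: "\<And>t. 0 \<le> t \<Longrightarrow> (y has_real_derivative (1 / \<tau>) * (- y t + w t)) (at t within {0..})"
    and "\<And>t. 0 \<le> t \<Longrightarrow> w t \<le> M" and "y 0 \<le> M" and "0 \<le> t"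
  shows "y t \<le> M"
proof (rule stays_below_level[OF der])
  fix s assume "0 \<le> s" "M < y s"
  then show "(1 / \<tau>) * (- y s + w s) < 0"
    using assms(3)[of s] assms(1) by (simp add: divide_neg_pos)
qed (use assms in auto)

lemma norm_le_if_inward:
  fixes x v :: "real \<Rightarrow> 'a::real_inner"
  assumes der: "\<And>t. 0 \<le> t \<Longrightarrow> (x has_vector_derivative v t) (at t within {0..})"
    and inward: "\<And>t. 0 \<le> t \<Longrightarrow> \<rho> < norm (x t) \<Longrightarrow> inner (x t) (v t) < 0"
    and "norm (x 0) \<le> \<rho>" and "0 \<le> t"
  shows "norm (x t) \<le> \<rho>"
proof -
  have "0 \<le> \<rho>"
    using \<open>norm (x 0) \<le> \<rho>\<close> norm_ge_zero order.trans by blast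
  have d: "((\<lambda>t. (norm (x t))\<^sup>2) has_real_derivative inner (x t) (v t) + inner (v t) (x t))
      (at t within {0..})" if "0 \<le> t" for t
    unfolding power2_norm_eq_inner using has_real_derivative_inner[OF der[OF that] der[OF that]] .
  have p: "inner (x t) (v t) + inner (v t) (x t) < 0"
    if "0 \<le> t" "\<rho>\<^sup>2 < (norm (x t))\<^sup>2" for t
  proof -
    have "\<rho> < norm (x t)"
      using that(2) norm_ge_zero by (rule power2_less_imp_less)
    then show ?thesis
      using inward[OF that(1)] by (simp add: inner_commute)
  qed
  have "(norm (x 0))\<^sup>2 \<le> \<rho>\<^sup>2"
    using power_mono[OF assms(3) norm_ge_zero] .
  then have "(norm (x t))\<^sup>2 \<le> \<rho>\<^sup>2"
    using stays_below_level[OF d p order.refl _ \<open>0 \<le> t\<close>] by simp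
  then show ?thesis
    using \<open>0 \<le> \<rho>\<close> by (rule power2_le_imp_le)
qed

lemma norm_eventually_ge_if_pushed:
  fixes x v :: "real \<Rightarrow> 'a::real_inner"
  assumes der: "\<And>t. 0 \<le> t \<Longrightarrow> (x has_vector_derivative v t) (at t within {0..})"
    and push: "\<And>t. 0 \<le> t \<Longrightarrow> inner (x t) u < \<epsilon> \<Longrightarrow> k \<le> inner (v t) u" and "0 < k"
  shows "\<exists>T\<ge>0. \<forall>t\<ge>T. \<epsilon> \<le> norm (x t) * norm u"
proof -
  have "((\<lambda>t. inner (x t) u) has_real_derivative inner (v t) u) (at t within {0..})" if "0 \<le> t" for t
    using has_real_derivative_inner[OF der[OF that] has_vector_derivative_const] by simp
  then obtain T where "0 \<le> T" "\<forall>t\<ge>T. \<epsilon> \<le> inner (x t) u"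
    using eventually_stays_above_level[where f' = "\<lambda>t. inner (v t) u"] push \<open>0 < k\<close> by blast
  moreover have "inner (x t) u \<le> norm (x t) * norm u" for t
    by (rule norm_cauchy_schwarz)
  ultimately show ?thesis
    by (meson order.trans)
qed

lemma gradV_eq_scaleR: "gradV Vr x s = (Vr (norm x) s / norm x) *\<^sub>R x"
  by (simp add: gradV_def)

lemma inner_drift_neg_outside_ball:
  fixes x u :: "'a::real_inner"
  assumes "0 < a" "0 \<le> b" "0 \<le> \<alpha>"
    and lower: "a * norm x - b \<le> Vr (norm x) s"
    and far: "(b + \<alpha> * norm u) / a < norm x"
  shows "inner x (- gradV Vr x s + \<alpha> *\<^sub>R u) < 0"
proof -
  have "b + \<alpha> * norm u < a * norm x"
    using far \<open>0 < a\<close> by (simp add: pos_divide_less_eq mult.commute)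
  moreover have "0 \<le> b + \<alpha> * norm u"
    using assms(2,3) by simp
  ultimately have "0 < a * norm x"
    by linarith
  then have "0 < norm x"
    using \<open>0 < a\<close> by (simp add: zero_less_mult_iff)
  have "inner x (- gradV Vr x s + \<alpha> *\<^sub>R u) = - Vr (norm x) s * norm x + \<alpha> * inner x u"
    using \<open>0 < norm x\<close> by (simp add: gradV_eq_scaleR inner_diff_right dot_square_norm power2_eq_square)
  also have "\<dots> \<le> - (a * norm x - b) * norm x + \<alpha> * (norm x * norm u)"
  proof -
    have "(a * norm x - b) * norm x \<le> Vr (norm x) s * norm x"
      using lower by (simp add: mult_right_mono)
    moreover have "\<alpha> * inner x u \<le> \<alpha> * (norm x * norm u)"
      using norm_cauchy_schwarz \<open>0 \<le> \<alpha>\<close> by (rule mult_left_mono)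
    ultimately show ?thesis
      by linarith
  qed
  also have "\<dots> = norm x * (b + \<alpha> * norm u - a * norm x)"
    by (simp add: algebra_simps)
  also have "\<dots> < 0"
    using \<open>0 < norm x\<close> \<open>b + \<alpha> * norm u < a * norm x\<close> by (simp add: mult_pos_neg)
  finally show ?thesis .
qed

lemma inner_drift_u_ge:
  fixes x u :: "'a::real_inner"
  assumes "0 \<le> a" "0 \<le> b" "0 \<le> C" "0 \<le> \<epsilon>"
    and lower: "a * norm x - b \<le> Vr (norm x) s" and upper: "Vr (norm x) s \<le> C * norm x"
    and "inner x u \<le> \<epsilon>"
  shows "\<alpha> * (norm u)\<^sup>2 - b * norm u - C * \<epsilon> \<le> inner (- gradV Vr x s + \<alpha> *\<^sub>R u) u"
proof -
  have "Vr (norm x) s / norm x * inner x u \<le> b * norm u + C * \<epsilon>"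
  proof (cases "0 < norm x")
    case False
    then show ?thesis
      using assms(2-4) by simp
  next
    case pos: True
    show ?thesis
    proof (cases "inner x u \<le> 0")
      case True
      have "Vr (norm x) s * inner x u \<le> (a * norm x - b) * inner x u"
        using lower True by (rule mult_right_mono_neg)
      also have "\<dots> = a * norm x * inner x u + b * (- inner x u)"
        by (simp add: algebra_simps)
      also have "\<dots> \<le> b * (norm x * norm u)"
      proof -
        have "a * norm x * inner x u \<le> 0"
          using True \<open>0 \<le> a\<close> by (simp add: mult_nonneg_nonpos)
        moreover have "b * (- inner x u) \<le> b * (norm x * norm u)"
          using norm_cauchy_schwarz[of x "- u"] \<open>0 \<le> b\<close> by (intro mult_left_mono) auto
        ultimately show ?thesis
          by linarith
      qed
      finally have "Vr (norm x) s / norm x * inner x u \<le> b * norm u"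
        using pos by (simp add: pos_divide_le_eq algebra_simps)
      then show ?thesis
        using mult_nonneg_nonneg[OF assms(3,4)] by linarith
    next
      case False
      have "Vr (norm x) s * inner x u \<le> C * norm x * inner x u"
        using upper False by (simp add: mult_right_mono)
      then have "Vr (norm x) s / norm x * inner x u \<le> C * inner x u"
        using pos by (simp add: pos_divide_le_eq algebra_simps)
      also have "\<dots> \<le> C * \<epsilon>"
        using \<open>inner x u \<le> \<epsilon>\<close> \<open>0 \<le> C\<close> by (rule mult_left_mono)
      finally show ?thesis
        using mult_nonneg_nonneg[OF assms(2) norm_ge_zero[of u]] by linarith
    qed
  qed
  moreover have "inner (- gradV Vr x s + \<alpha> *\<^sub>R u) u = \<alpha> * (norm u)\<^sup>2 - Vr (norm x) s / norm x * inner x u"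
    by (simp add: gradV_eq_scaleR inner_diff_left dot_square_norm)
  ultimately show ?thesis
    by linarith
qed

lemma gradient_flow_norm_le:
  fixes x :: "real \<Rightarrow> 'a::real_inner" and s :: "real \<Rightarrow> real"
  assumes "0 < \<tau>" "0 < a" "0 \<le> b" "0 \<le> \<alpha>"
    and der: "\<And>t. 0 \<le> t \<Longrightarrow> (x has_vector_derivative
                (1 / \<tau>) *\<^sub>R (- gradV Vr (x t) (s t) + \<alpha> *\<^sub>R u)) (at t within {0..})"
    and lower: "\<And>t. 0 \<le> t \<Longrightarrow> a * norm (x t) - b \<le> Vr (norm (x t)) (s t)"
    and "0 \<le> t"
  shows "norm (x t) \<le> max (norm (x 0)) ((b + \<alpha> * norm u) / a)"
proof (rule norm_le_if_inward[OF der _ _ \<open>0 \<le> t\<close>])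
  fix t :: real assume "0 \<le> t" "max (norm (x 0)) ((b + \<alpha> * norm u) / a) < norm (x t)"
  then have "inner (x t) (- gradV Vr (x t) (s t) + \<alpha> *\<^sub>R u) < 0"
    using assms(2-4) lower by (intro inner_drift_neg_outside_ball[where a = a and b = b]) auto
  then show "inner (x t) ((1 / \<tau>) *\<^sub>R (- gradV Vr (x t) (s t) + \<alpha> *\<^sub>R u)) < 0"
    using \<open>0 < \<tau>\<close> by (simp add: divide_neg_pos)
qed simp_all

lemma gradient_flow_norm_eventually_ge:
  fixes x :: "real \<Rightarrow> 'a::real_inner" and s :: "real \<Rightarrow> real"
  assumes "0 < \<tau>" "0 \<le> a" "0 \<le> b" "0 \<le> C" and margin: "b < \<alpha> * norm u"
    and der: "\<And>t. 0 \<le> t \<Longrightarrow> (x has_vector_derivative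
                (1 / \<tau>) *\<^sub>R (- gradV Vr (x t) (s t) + \<alpha> *\<^sub>R u)) (at t within {0..})"
    and lower: "\<And>t. 0 \<le> t \<Longrightarrow> a * norm (x t) - b \<le> Vr (norm (x t)) (s t)"
    and upper: "\<And>t. 0 \<le> t \<Longrightarrow> Vr (norm (x t)) (s t) \<le> C * norm (x t)"
  shows "\<exists>T\<ge>0. \<exists>r>0. \<forall>t\<ge>T. r \<le> norm (x t)"
proof -
  have "0 < \<alpha> * norm u"
    using margin \<open>0 \<le> b\<close> by linarith
  then have "0 < norm u"
    by (auto simp: zero_less_mult_iff)
  define K where "K = \<alpha> * (norm u)\<^sup>2 - b * norm u"
  \<comment> \<open>the loss C \<epsilon> in the drift estimate then eats at most half of the margin K\<close>
  define \<epsilon> where "\<epsilon> = K / (2 * (C + 1))"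
  have "K = norm u * (\<alpha> * norm u - b)"
    by (simp add: K_def power2_eq_square algebra_simps)
  then have "0 < K"
    using margin \<open>0 < norm u\<close> by simp
  then have "0 < \<epsilon>"
    using \<open>0 \<le> C\<close> by (simp add: \<epsilon>_def)
  have "C * \<epsilon> \<le> (C + 1) * \<epsilon>"
    using \<open>0 < \<epsilon>\<close> by simp
  also have "\<dots> = K / 2"
    using \<open>0 \<le> C\<close> by (simp add: \<epsilon>_def field_simps)
  finally have "C * \<epsilon> \<le> K / 2" .
  have push: "K / (2 * \<tau>) \<le> inner ((1 / \<tau>) *\<^sub>R (- gradV Vr (x t) (s t) + \<alpha> *\<^sub>R u)) u"
    if "0 \<le> t" "inner (x t) u < \<epsilon>" for t
  proof -
    have "K - C * \<epsilon> \<le> inner (- gradV Vr (x t) (s t) + \<alpha> *\<^sub>R u) u"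
      unfolding K_def using assms(2-4) lower upper that \<open>0 < \<epsilon>\<close>
      by (intro inner_drift_u_ge[where a = a]) auto
    then have "K / 2 / \<tau> \<le> inner (- gradV Vr (x t) (s t) + \<alpha> *\<^sub>R u) u / \<tau>"
      using \<open>C * \<epsilon> \<le> K / 2\<close> \<open>0 < \<tau>\<close> by (intro divide_right_mono) auto
    then show ?thesis
      by simp
  qed
  have "0 < K / (2 * \<tau>)"
    using \<open>0 < K\<close> \<open>0 < \<tau>\<close> by simp
  then obtain T where "0 \<le> T" and T: "\<forall>t\<ge>T. \<epsilon> \<le> norm (x t) * norm u"
    using norm_eventually_ge_if_pushed[OF der push] by blast
  have "\<forall>t\<ge>T. \<epsilon> / norm u \<le> norm (x t)"
    using T \<open>0 < norm u\<close> by (simp add: pos_divide_le_eq)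
  moreover have "0 < \<epsilon> / norm u"
    using \<open>0 < \<epsilon>\<close> \<open>0 < norm u\<close> by simp
  ultimately show ?thesis
    using \<open>0 \<le> T\<close> by blast
qed

theorem lemma1:
  fixes V Vr Vs :: "real \<Rightarrow> real \<Rightarrow> real"
    and g h :: "real \<Rightarrow> real"
    and \<tau> \<tau>s \<alpha> xs0 a b xs_lo xs_hi :: real
    and rstar :: "real \<Rightarrow> real"
    and x0 u :: "'a::{real_inner, complete_space}"
    and x :: "real \<Rightarrow> 'a" and xs :: "real \<Rightarrow> real"
  assumes tau: "\<tau> > 0" and taus: "\<tau>s > 0" and alpha: "\<alpha> > 0"
    and g_cont: "continuous_on {0..} g"
    and g_nonneg: "\<forall>r\<ge>0. g r \<ge> 0"
    and g_mono: "mono_on {0..} g"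
    and g0: "g 0 = 0"
    and V_C1: "\<forall>r s. ((\<lambda>(r, s). V r s) has_derivative
                 (\<lambda>(dr, ds). Vr r s * dr + Vs r s * ds)) (at (r, s))"
    and Vr_cont: "continuous_on UNIV (\<lambda>(r, s). Vr r s)"
    and Vs_cont: "continuous_on UNIV (\<lambda>(r, s). Vs r s)"
    and xs0: "xs0 \<ge> 0"
    \<comment> \<open>(A1)\<close>
    and a_pos: "a > 0" and b_nonneg: "b \<ge> 0"
    and h_cont: "continuous_on {0..} h" and h_nonneg: "\<forall>r\<ge>0. h r \<ge> 0"
    and h_mono: "mono_on {0..} h" and h0: "h 0 = 0"
    and A1_lower: "\<forall>r\<ge>0. \<forall>s\<ge>0. a * r - b \<le> Vr r s"
    and A1_upper: "\<forall>rb\<ge>0. \<forall>r\<in>{0..rb}. \<forall>s\<in>{0..\<bar>xs0\<bar> + g rb}. Vr r s \<le> h rb * r"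
    \<comment> \<open>(A2): subcritical pitchfork of  r' = - Vr(r, s)  at s = xs_lo\<close>
    and A2_eq0: "\<forall>s. is_equilibrium (\<lambda>r. - Vr r s) 0"
    and A2_order: "xs_lo < xs_hi"
    and A2_low: "\<forall>s<xs_lo. rstar s > 0 \<and>
                   {e. loc_asym_stable (\<lambda>r. - Vr r s) e} = {- rstar s, rstar s}"
    and A2_mid: "\<forall>s\<in>{xs_lo<..<xs_hi}. rstar s > 0 \<and>
                   {e. loc_asym_stable (\<lambda>r. - Vr r s) e} = {- rstar s, 0, rstar s}
                   \<and> rstar differentiable (at s) \<and> deriv rstar s < 0"
    and A2_high: "\<forall>s>xs_hi. glob_asym_stable (\<lambda>r. - Vr r s) 0"
    \<comment> \<open>input and solution\<close>
    and u_big: "norm u > b / \<alpha>"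
    and x_init: "x 0 = x0" and xs_init: "xs 0 = xs0"
    and x_ode: "\<forall>t\<ge>0. (x has_vector_derivative
                  (1 / \<tau>) *\<^sub>R (- gradV Vr (x t) (xs t) + \<alpha> *\<^sub>R u)) (at t within {0..})"
    and xs_ode: "\<forall>t\<ge>0. (xs has_real_derivative
                  (1 / \<tau>s) * (- xs t + g (norm (x t)))) (at t within {0..})"
  shows "\<exists>T\<ge>0. \<exists>rl>0. \<exists>ru>0. \<forall>t\<ge>T. norm (x t) \<in> {rl..ru}"
proof -
  have "0 \<le> b / \<alpha>"
    using alpha b_nonneg by simp
  then have margin: "b < \<alpha> * norm u"
    using u_big alpha by (simp add: pos_divide_less_eq mult.commute)
  have xs_nonneg: "0 \<le> xs t" if "0 \<le> t" for t
    using first_order_lag_ge[OF taus xs_ode[rule_format], of 0] g_nonneg xs0 xs_init that by simp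
  have lower: "a * norm (x t) - b \<le> Vr (norm (x t)) (xs t)" if "0 \<le> t" for t
    using A1_lower xs_nonneg[OF that] by simp
  define R where "R = max (norm x0) ((b + \<alpha> * norm u) / a)"
  have "0 < R"
    using a_pos b_nonneg alpha margin by (simp add: R_def less_max_iff_disj)
  have norm_le: "norm (x t) \<le> R" if "0 \<le> t" for t
    using gradient_flow_norm_le[OF tau a_pos b_nonneg _ x_ode[rule_format] lower that] alpha
    by (simp add: R_def x_init)
  have xs_le: "xs t \<le> \<bar>xs0\<bar> + g R" if "0 \<le> t" for t
  proof (rule first_order_lag_le[OF taus xs_ode[rule_format] _ _ that])
    show "g (norm (x t)) \<le> \<bar>xs0\<bar> + g R" if "0 \<le> t" for t
      using mono_onD[OF g_mono, of "norm (x t)" R] norm_le[OF that] \<open>0 < R\<close> by simp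
  qed (use xs_init g_nonneg[rule_format, of R] \<open>0 < R\<close> in simp_all)
  have "Vr (norm (x t)) (xs t) \<le> h R * norm (x t)" if "0 \<le> t" for t
    using A1_upper[rule_format, of R "norm (x t)" "xs t"] \<open>0 < R\<close>
      norm_le[OF that] xs_nonneg[OF that] xs_le[OF that] by simp
  moreover have "0 \<le> h R"
    using h_nonneg \<open>0 < R\<close> by simp
  ultimately obtain T rl where "0 \<le> T" "0 < rl" "\<forall>t\<ge>T. rl \<le> norm (x t)"
    using gradient_flow_norm_eventually_ge[OF tau _ b_nonneg _ margin x_ode[rule_format] lower]
      a_pos by (meson less_imp_le)
  moreover have "\<forall>t\<ge>T. norm (x t) \<le> R"
    using norm_le \<open>0 \<le> T\<close> by simp
  ultimately show ?thesis
    using \<open>0 < R\<close> by (intro exI[of _ T] exI[of _ rl] exI[of _ R]) auto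
qed

end
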